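(* Let $f:\mathcal{P}^n\to X$ be an onto, efficient and tops-only rule. Then $f$ is NOM if and only if at least one of the following holds: (i) there is at most one agent $i\in N$ with $V_i\neq\emptyset$ and, moreover, $SV_i=V_i$; (ii) there is $y\in X$ such that $SV_i=V_i\subseteq\{y\}$ for each $i\in N$.
   Context: $N=\{1,\dots,n\}$, $n\ge2$, agents; $X$ finite alternatives, $|X|\ge2$; $\mathcal{P}$ all strict linear orders on $X$; $t(P_i)$ the top of $P_i$. A rule $f:\mathcal{P}^n\to X$ is onto; tops-only if $f(P)=f(P')$ whenever all tops coincide; efficient if for each $P$ there is no $x\in X$ with $xP_if(P)$ for all $i$. Option set $O^f(P_i)=\{f(P_i,P_{-i}):P_{-i}\in\mathcal{P}^{n-1}\}$. $P_i'$ is a manipulation at $P_i$ if $f(P_i',P_{-i})P_if(P_i,P_{-i})$ for some $P_{-i}$; it is obvious if the $P_i$-worst element of $O^f(P_i')$ is strictly $P_i$-better than the $P_i$-worst element of $O^f(P_i)$, or the $P_i$-best element of $O^f(P_i')$ is strictly $P_i$-better than the $P_i$-best element of $O^f(P_i)$. $f$ is NOM if there are no obvious manipulations. Agent $i$ vetoes $x$ via $P_i$ if $x\notin O^f(P_i)$; $V_i$ = alternatives $i$ vetoes via some preference; $\mathcal{V}_i^x$ = preferences via which $i$ vetoes $x$; $i$ strongly vetoes $x$ if $\mathcal{V}_i^x=\{P_i:t(P_i)\ne x\}$; $SV_i$ = set of alternatives strongly vetoed by $i$. *)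

theory Defs
  imports Main
begin

(* Agents: elements of a finite type 'i (N); alternatives: elements of a finite type 'a (X).
   A preference is a strict linear order on X, as a relation: (x,y) \<in> R means x R y
   ("x is strictly preferred to y"). *)

definition prefs :: "'a rel set" where
  "prefs = {R. strict_linear_order R}"

definition profiles :: "('i \<Rightarrow> 'a rel) set" where
  "profiles = {P. \<forall>i. P i \<in> prefs}"

definition top :: "'a rel \<Rightarrow> 'a" where
  "top R = (THE x. \<forall>y. y \<noteq> x \<longrightarrow> (x, y) \<in> R)"

definition onto :: "(('i \<Rightarrow> 'a rel) \<Rightarrow> 'a) \<Rightarrow> bool" where
  "onto f \<longleftrightarrow> (\<forall>x. \<exists>P\<in>profiles. f P = x)"

definition tops_only :: "(('i \<Rightarrow> 'a rel) \<Rightarrow> 'a) \<Rightarrow> bool" where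
  "tops_only f \<longleftrightarrow> (\<forall>P\<in>profiles. \<forall>P'\<in>profiles.
      (\<forall>i. top (P i) = top (P' i)) \<longrightarrow> f P = f P')"

definition efficient :: "(('i \<Rightarrow> 'a rel) \<Rightarrow> 'a) \<Rightarrow> bool" where
  "efficient f \<longleftrightarrow> (\<forall>P\<in>profiles. \<not> (\<exists>x. \<forall>i. (x, f P) \<in> P i))"

definition option_set :: "(('i \<Rightarrow> 'a rel) \<Rightarrow> 'a) \<Rightarrow> 'i \<Rightarrow> 'a rel \<Rightarrow> 'a set" where
  "option_set f i R = {f (P(i := R)) | P. P \<in> profiles}"

definition worst :: "'a rel \<Rightarrow> 'a set \<Rightarrow> 'a" where
  "worst R S = (THE w. w \<in> S \<and> (\<forall>y\<in>S. y \<noteq> w \<longrightarrow> (y, w) \<in> R))"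

definition best :: "'a rel \<Rightarrow> 'a set \<Rightarrow> 'a" where
  "best R S = (THE b. b \<in> S \<and> (\<forall>y\<in>S. y \<noteq> b \<longrightarrow> (b, y) \<in> R))"

definition manipulation :: "(('i \<Rightarrow> 'a rel) \<Rightarrow> 'a) \<Rightarrow> 'i \<Rightarrow> 'a rel \<Rightarrow> 'a rel \<Rightarrow> bool" where
  "manipulation f i R R' \<longleftrightarrow>
     (\<exists>P\<in>profiles. (f (P(i := R')), f (P(i := R))) \<in> R)"

definition obvious_manipulation ::
    "(('i \<Rightarrow> 'a rel) \<Rightarrow> 'a) \<Rightarrow> 'i \<Rightarrow> 'a rel \<Rightarrow> 'a rel \<Rightarrow> bool" where
  "obvious_manipulation f i R R' \<longleftrightarrow> manipulation f i R R' \<and>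
     ((worst R (option_set f i R'), worst R (option_set f i R)) \<in> R \<or>
      (best R (option_set f i R'), best R (option_set f i R)) \<in> R)"

definition NOM :: "(('i \<Rightarrow> 'a rel) \<Rightarrow> 'a) \<Rightarrow> bool" where
  "NOM f \<longleftrightarrow> (\<forall>i. \<forall>R\<in>prefs. \<forall>R'\<in>prefs. \<not> obvious_manipulation f i R R')"

definition veto_set :: "(('i \<Rightarrow> 'a rel) \<Rightarrow> 'a) \<Rightarrow> 'i \<Rightarrow> 'a set" where
  "veto_set f i = {x. \<exists>R\<in>prefs. x \<notin> option_set f i R}"

definition veto_prefs :: "(('i \<Rightarrow> 'a rel) \<Rightarrow> 'a) \<Rightarrow> 'i \<Rightarrow> 'a \<Rightarrow> 'a rel set" where
  "veto_prefs f i x = {R\<in>prefs. x \<notin> option_set f i R}"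

definition strongly_vetoes :: "(('i \<Rightarrow> 'a rel) \<Rightarrow> 'a) \<Rightarrow> 'i \<Rightarrow> 'a \<Rightarrow> bool" where
  "strongly_vetoes f i x \<longleftrightarrow> veto_prefs f i x = {R\<in>prefs. top R \<noteq> x}"

definition strong_veto_set :: "(('i \<Rightarrow> 'a rel) \<Rightarrow> 'a) \<Rightarrow> 'i \<Rightarrow> 'a set" where
  "strong_veto_set f i = {x. strongly_vetoes f i x}"

end

theory Submission imports Defs begin

(* Efficiency makes f unanimous, so top R always lies in O^f(R) and is its R-best element;
   an obvious manipulation must therefore improve the R-worst element.  If every veto of
   agent i is strong, then O^f(R) - {top R} is contained in every O^f(R'), so no R' can do
   that.  Conversely, if i vetoes x via R0 but x is in O^f(R) for some R with top R ~= x,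
   tops-onlyness allows moving x to the bottom of R without changing O^f(R); then x is the
   worst element of O^f(R), and R0 is an obvious manipulation.  Hence f is NOM iff
   SV_i = V_i for every i.  Finally, if two different agents strongly veto x and z with
   x ~= z, then at the profile where the first ranks z over x over everything else and
   the second ranks x first, the outcome is neither x nor z, and x Pareto-dominates it. *)

lemma prefs_irrefl: "R \<in> prefs \<Longrightarrow> (a, a) \<notin> R"
  unfolding prefs_def strict_linear_order_on_def irrefl_def by blast

lemma prefs_asym: "R \<in> prefs \<Longrightarrow> (a, b) \<in> R \<Longrightarrow> (b, a) \<notin> R"
  unfolding prefs_def strict_linear_order_on_def irrefl_def trans_def by blast

lemma prefs_total: "R \<in> prefs \<Longrightarrow> a \<noteq> b \<Longrightarrow> (a, b) \<in> R \<or> (b, a) \<in> R"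
  unfolding prefs_def strict_linear_order_on_def total_on_def by blast

lemma prefs_wf:
  assumes "R \<in> prefs"
  shows "wf (R :: 'a::finite rel)" and "wf (R\<inverse>)"
proof -
  have "trans R" "irrefl R"
    using assms unfolding prefs_def strict_linear_order_on_def by auto
  then have "acyclic R" by (simp add: acyclic_irrefl)
  then show "wf R" "wf (R\<inverse>)"
    by (simp_all add: finite_acyclic_wf finite_acyclic_wf_converse)
qed

lemma top_eqI:
  assumes "R \<in> prefs" and "\<And>y. y \<noteq> c \<Longrightarrow> (c, y) \<in> R"
  shows "top R = c"
  unfolding top_def
proof (rule the_equality)
  fix x assume x: "\<forall>y. y \<noteq> x \<longrightarrow> (x, y) \<in> R"
  show "x = c"
  proof (rule ccontr)
    assume "x \<noteq> c"
    with x assms(2) have "(x, c) \<in> R" "(c, x) \<in> R" by auto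
    with prefs_asym[OF assms(1)] show False by blast
  qed
qed (use assms in blast)

lemma top_preferred:
  assumes "R \<in> prefs" and "y \<noteq> top R"
  shows "(top R, y :: 'a::finite) \<in> R"
proof -
  obtain z where "\<And>y. (y, z) \<in> R \<Longrightarrow> y \<notin> UNIV"
    by (rule wfE_min[OF prefs_wf(1)[OF assms(1)] UNIV_I]) blast
  then have z_max: "(y, z) \<notin> R" for y by blast
  have above: "(z, y) \<in> R" if "y \<noteq> z" for y
    using prefs_total[OF assms(1) that] z_max by simp
  then have "top R = z" by (rule top_eqI[OF assms(1)])
  with assms(2) above show ?thesis by simp
qed

lemma not_preferred_to_top:
  assumes "R \<in> prefs"
  shows "(y, top R) \<notin> (R :: 'a::finite rel)"
proof (cases "y = top R")
  case True
  then show ?thesis using prefs_irrefl[OF assms] by simp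
next
  case False
  then show ?thesis using prefs_asym[OF assms] top_preferred[OF assms] by blast
qed

lemma worst_eqI:
  assumes "R \<in> prefs" and "w \<in> S" and "\<And>y. y \<in> S \<Longrightarrow> y \<noteq> w \<Longrightarrow> (y, w) \<in> R"
  shows "worst R S = w"
  unfolding worst_def
proof (rule the_equality)
  fix v assume v: "v \<in> S \<and> (\<forall>y\<in>S. y \<noteq> v \<longrightarrow> (y, v) \<in> R)"
  show "v = w"
  proof (rule ccontr)
    assume "v \<noteq> w"
    with v assms(2,3) have "(w, v) \<in> R" "(v, w) \<in> R" by auto
    with prefs_asym[OF assms(1)] show False by blast
  qed
qed (use assms in blast)

lemma best_eqI:
  assumes "R \<in> prefs" and "b \<in> S" and "\<And>y. y \<in> S \<Longrightarrow> y \<noteq> b \<Longrightarrow> (b, y) \<in> R"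
  shows "best R S = b"
  unfolding best_def
proof (rule the_equality)
  fix v assume v: "v \<in> S \<and> (\<forall>y\<in>S. y \<noteq> v \<longrightarrow> (v, y) \<in> R)"
  show "v = b"
  proof (rule ccontr)
    assume "v \<noteq> b"
    with v assms(2,3) have "(v, b) \<in> R" "(b, v) \<in> R" by auto
    with prefs_asym[OF assms(1)] show False by blast
  qed
qed (use assms in blast)

lemma
  assumes "R \<in> prefs" and "S \<noteq> {}"
  shows worst_in: "worst R (S :: 'a::finite set) \<in> S"
    and worst_below: "y \<in> S \<Longrightarrow> y \<noteq> worst R S \<Longrightarrow> (y, worst R S) \<in> R"
proof -
  obtain s where "s \<in> S" using assms(2) by blast
  obtain w where w: "w \<in> S" and "\<And>y. (y, w) \<in> R\<inverse> \<Longrightarrow> y \<notin> S"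
    by (rule wfE_min[OF prefs_wf(2)[OF assms(1)] \<open>s \<in> S\<close>]) blast
  then have below: "(y, w) \<in> R" if "y \<in> S" and "y \<noteq> w" for y
    using prefs_total[OF assms(1) \<open>y \<noteq> w\<close>] that by blast
  with worst_eqI[OF assms(1) w] have "worst R S = w" .
  with w below show "worst R S \<in> S" "y \<in> S \<Longrightarrow> y \<noteq> worst R S \<Longrightarrow> (y, worst R S) \<in> R"
    by auto
qed

lemma ex_pref_refining:
  fixes g :: "'a::finite \<Rightarrow> nat"
  shows "\<exists>R\<in>prefs. \<forall>a b. g a < g b \<longrightarrow> (a, b) \<in> R"
proof -
  obtain r :: "'a \<Rightarrow> nat" where "inj r"
    using finite_imp_inj_to_nat_seg[OF finite_UNIV] by blast
  define R where "R = {(a, b). g a < g b \<or> (g a = g b \<and> r a < r b)}"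
  have "strict_linear_order R"
    unfolding strict_linear_order_on_def trans_def irrefl_def total_on_def R_def
    using \<open>inj r\<close> by auto (metis injD linorder_neqE_nat)
  then show ?thesis unfolding prefs_def R_def by auto
qed

lemma ex_pref_top_bottom:
  assumes "c \<noteq> (x :: 'a::finite)"
  shows "\<exists>R\<in>prefs. top R = c \<and> (\<forall>y. y \<noteq> x \<longrightarrow> (y, x) \<in> R)"
proof -
  define g :: "'a \<Rightarrow> nat" where "g y = (if y = c then 0 else if y = x then 2 else 1)" for y
  obtain R where R: "R \<in> prefs" and refines: "\<And>a b. g a < g b \<Longrightarrow> (a, b) \<in> R"
    using ex_pref_refining[of g] by blast
  have "top R = c" by (rule top_eqI[OF R], rule refines) (simp add: g_def)
  moreover have "(y, x) \<in> R" if "y \<noteq> x" for y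
    using that assms by (intro refines) (auto simp: g_def)
  ultimately show ?thesis using R by blast
qed

lemma ex_pref_top_second:
  assumes "c \<noteq> (x :: 'a::finite)"
  shows "\<exists>R\<in>prefs. top R = c \<and> (\<forall>y. y \<noteq> c \<longrightarrow> y \<noteq> x \<longrightarrow> (x, y) \<in> R)"
proof -
  define g :: "'a \<Rightarrow> nat" where "g y = (if y = c then 0 else if y = x then 1 else 2)" for y
  obtain R where R: "R \<in> prefs" and refines: "\<And>a b. g a < g b \<Longrightarrow> (a, b) \<in> R"
    using ex_pref_refining[of g] by blast
  have "top R = c" by (rule top_eqI[OF R], rule refines) (simp add: g_def)
  moreover have "(x, y) \<in> R" if "y \<noteq> c" and "y \<noteq> x" for y
    using that assms by (intro refines) (auto simp: g_def)
  ultimately show ?thesis using R by blast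
qed

lemma profiles_upd: "P \<in> profiles \<Longrightarrow> R \<in> prefs \<Longrightarrow> P(i := R) \<in> profiles"
  unfolding profiles_def by auto

lemma profiles_const: "R \<in> prefs \<Longrightarrow> (\<lambda>_. R) \<in> profiles"
  unfolding profiles_def by auto

lemma option_setI: "P \<in> profiles \<Longrightarrow> f (P(i := R)) \<in> option_set f i R"
  unfolding option_set_def by blast

lemma option_set_self: "P \<in> profiles \<Longrightarrow> f P \<in> option_set f i (P i)"
  using option_setI[of P f i "P i"] by simp

lemma option_set_cong_top:
  assumes "tops_only f" and "R \<in> prefs" and "R' \<in> prefs" and "top R = top R'"
  shows "option_set f i R = option_set f i R'"
proof -
  have "f (P(i := R)) = f (P(i := R'))" if "P \<in> profiles" for P
  proof -
    have "\<forall>k. top ((P(i := R)) k) = top ((P(i := R')) k)" using assms(4) by simp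
    with assms(1) profiles_upd[OF that assms(2)] profiles_upd[OF that assms(3)] show ?thesis
      unfolding tops_only_def by blast
  qed
  then show ?thesis unfolding option_set_def by (intro Collect_cong) metis
qed

lemma efficient_unanimous:
  assumes "efficient f" and "R \<in> prefs"
  shows "f (\<lambda>_::'i. R) = (top R :: 'a::finite)"
proof (rule ccontr)
  assume "f (\<lambda>_. R) \<noteq> top R"
  then have "\<forall>i::'i. (top R, f (\<lambda>_. R)) \<in> R" using top_preferred[OF assms(2)] by simp
  with assms profiles_const show False unfolding efficient_def by blast
qed

lemma top_in_option_set:
  assumes "efficient f" and "R \<in> prefs"
  shows "top R \<in> option_set f i (R :: 'a::finite rel)"
  using option_set_self[OF profiles_const[OF assms(2)], of f i]
  by (simp add: efficient_unanimous[OF assms])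

lemma best_option_set:
  assumes "efficient f" and "R \<in> prefs"
  shows "best R (option_set f i R) = (top R :: 'a::finite)"
  using assms top_preferred top_in_option_set by (intro best_eqI) auto

lemma not_obvious_manipulation_if_option_set_subset:
  fixes f :: "('i \<Rightarrow> 'a::finite rel) \<Rightarrow> 'a"
  assumes eff: "efficient f" and R: "R \<in> prefs" and R': "R' \<in> prefs"
    and sub: "option_set f i R - {top R} \<subseteq> option_set f i R'"
  shows "\<not> obvious_manipulation f i R R'"
proof -
  let ?O = "option_set f i R" and ?O' = "option_set f i R'"
  have "?O \<noteq> {}" "?O' \<noteq> {}" using top_in_option_set[OF eff] R R' by blast+
  have "(worst R ?O', worst R ?O) \<notin> R"
  proof (cases "worst R ?O = top R")
    case True then show ?thesis using not_preferred_to_top[OF R] by simp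
  next
    case False
    then have "worst R ?O \<in> ?O'" using worst_in[OF R \<open>?O \<noteq> {}\<close>] sub by blast
    then show ?thesis using worst_below[OF R \<open>?O' \<noteq> {}\<close>] prefs_asym[OF R] prefs_irrefl[OF R]
      by metis
  qed
  moreover have "(best R ?O', best R ?O) \<notin> R"
    using best_option_set[OF eff R] not_preferred_to_top[OF R] by simp
  ultimately show ?thesis unfolding obvious_manipulation_def by blast
qed

lemma strong_veto_set_subset_veto_set:
  assumes "card (UNIV :: 'a::finite set) \<ge> 2"
  shows "strong_veto_set f i \<subseteq> (veto_set f i :: 'a set)"
proof
  fix x assume "x \<in> strong_veto_set f i"
  then have strong: "veto_prefs f i x = {R\<in>prefs. top R \<noteq> x}"
    unfolding strong_veto_set_def strongly_vetoes_def by simp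
  have "UNIV \<noteq> {x}"
  proof
    assume "UNIV = {x}"
    then have "card (UNIV :: 'a set) = Suc 0" using card_1_singleton_iff by blast
    with assms show False by simp
  qed
  then obtain c where "c \<noteq> x" by blast
  then obtain R where "R \<in> prefs" "top R = c" using ex_pref_top_bottom by blast
  with strong \<open>c \<noteq> x\<close> have "R \<in> veto_prefs f i x" by simp
  then show "x \<in> veto_set f i" unfolding veto_prefs_def veto_set_def by blast
qed

lemma option_set_diff_top_subset:
  assumes "strong_veto_set f i = veto_set f i" and "R \<in> prefs" and "R' \<in> prefs"
  shows "option_set f i R - {top R} \<subseteq> option_set f i R'"
proof
  fix x assume x: "x \<in> option_set f i R - {top R}"
  show "x \<in> option_set f i R'"
  proof (rule ccontr)
    assume "x \<notin> option_set f i R'"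
    with \<open>R' \<in> prefs\<close> have "x \<in> veto_set f i" unfolding veto_set_def by blast
    with assms(1) have "veto_prefs f i x = {R\<in>prefs. top R \<noteq> x}"
      unfolding strong_veto_set_def strongly_vetoes_def by blast
    with \<open>R \<in> prefs\<close> x show False unfolding veto_prefs_def by auto
  qed
qed

lemma NOM_if_strong_veto_sets_eq:
  fixes f :: "('i \<Rightarrow> 'a::finite rel) \<Rightarrow> 'a"
  assumes "efficient f" and "\<And>i. strong_veto_set f i = veto_set f i"
  shows "NOM f"
  unfolding NOM_def
  using not_obvious_manipulation_if_option_set_subset[OF assms(1)]
    option_set_diff_top_subset[OF assms(2)] by blast

lemma vetoed_not_in_option_set:
  fixes f :: "('i \<Rightarrow> 'a::finite rel) \<Rightarrow> 'a"
  assumes nom: "NOM f" and "tops_only f"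
    and R0: "R0 \<in> prefs" "x \<notin> option_set f i R0"
    and R: "R \<in> prefs" "top R \<noteq> x"
  shows "x \<notin> option_set f i R"
proof
  assume "x \<in> option_set f i R"
  obtain R1 where R1: "R1 \<in> prefs" "top R1 = top R" and x_bottom: "\<forall>y. y \<noteq> x \<longrightarrow> (y, x) \<in> R1"
    using ex_pref_top_bottom[OF R(2)] by blast
  have "option_set f i R1 = option_set f i R"
    using option_set_cong_top[OF \<open>tops_only f\<close> R1(1) R(1) R1(2)] .
  with \<open>x \<in> option_set f i R\<close> have x_opt: "x \<in> option_set f i R1" by simp
  then obtain P where P: "P \<in> profiles" "f (P(i := R1)) = x"
    unfolding option_set_def by blast
  have "f (P(i := R0)) \<in> option_set f i R0" using option_setI[OF P(1)] .
  then have "manipulation f i R1 R0"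
    using P R0(2) x_bottom unfolding manipulation_def by metis
  moreover have "worst R1 (option_set f i R1) = x"
    using worst_eqI[OF R1(1) x_opt] x_bottom by blast
  moreover have "worst R1 (option_set f i R0) \<noteq> x"
  proof -
    have "option_set f i R0 \<noteq> {}" using \<open>f (P(i := R0)) \<in> option_set f i R0\<close> by blast
    then have "worst R1 (option_set f i R0) \<in> option_set f i R0" by (rule worst_in[OF R1(1)])
    with R0(2) show ?thesis by blast
  qed
  ultimately have "obvious_manipulation f i R1 R0"
    using x_bottom unfolding obvious_manipulation_def by auto
  with nom R1(1) R0(1) show False unfolding NOM_def by blast
qed

lemma veto_set_subset_strong_veto_set:
  fixes f :: "('i \<Rightarrow> 'a::finite rel) \<Rightarrow> 'a"
  assumes "NOM f" and "efficient f" and "tops_only f"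
  shows "veto_set f i \<subseteq> strong_veto_set f i"
proof
  fix x assume "x \<in> veto_set f i"
  then obtain R0 where R0: "R0 \<in> prefs" "x \<notin> option_set f i R0"
    unfolding veto_set_def by blast
  have "veto_prefs f i x = {R\<in>prefs. top R \<noteq> x}"
    using top_in_option_set[OF \<open>efficient f\<close>] vetoed_not_in_option_set[OF assms(1,3) R0]
    unfolding veto_prefs_def by blast
  then show "x \<in> strong_veto_set f i"
    unfolding strong_veto_set_def strongly_vetoes_def by simp
qed

lemma NOM_iff_strong_veto_sets_eq:
  fixes f :: "('i \<Rightarrow> 'a::finite rel) \<Rightarrow> 'a"
  assumes "card (UNIV :: 'a set) \<ge> 2" and "efficient f" and "tops_only f"
  shows "NOM f \<longleftrightarrow> (\<forall>i. strong_veto_set f i = veto_set f i)"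
proof
  assume "NOM f"
  show "\<forall>i. strong_veto_set f i = veto_set f i"
    using subset_antisym[OF strong_veto_set_subset_veto_set[OF assms(1)]
        veto_set_subset_strong_veto_set[OF \<open>NOM f\<close> assms(2,3)]] by simp
next
  assume "\<forall>i. strong_veto_set f i = veto_set f i"
  then show "NOM f" by (intro NOM_if_strong_veto_sets_eq[OF assms(2)]) simp
qed

lemma strongly_vetoed_eq:
  fixes f :: "('i \<Rightarrow> 'a::finite rel) \<Rightarrow> 'a"
  assumes eff: "efficient f" and "i \<noteq> j"
    and x: "strongly_vetoes f i x" and z: "strongly_vetoes f j z"
  shows "x = z"
proof (rule ccontr)
  assume "x \<noteq> z"
  obtain Ri where Ri: "Ri \<in> prefs" "top Ri = z" "\<forall>y. y \<noteq> z \<longrightarrow> y \<noteq> x \<longrightarrow> (x, y) \<in> Ri"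
    using ex_pref_top_second \<open>x \<noteq> z\<close> by metis
  obtain Rj where Rj: "Rj \<in> prefs" "top Rj = x"
    using ex_pref_top_second \<open>x \<noteq> z\<close> by metis
  define P where "P = (\<lambda>k. if k = i then Ri else Rj)"
  have P: "P \<in> profiles" unfolding profiles_def P_def using Ri Rj by auto
  have "P i = Ri" "P j = Rj" using \<open>i \<noteq> j\<close> by (simp_all add: P_def)
  then have "f P \<in> option_set f i Ri" "f P \<in> option_set f j Rj"
    using option_set_self[OF P] by metis+
  moreover have "Ri \<in> veto_prefs f i x" "Rj \<in> veto_prefs f j z"
    using x z Ri Rj \<open>x \<noteq> z\<close> unfolding strongly_vetoes_def by auto
  ultimately have "f P \<noteq> x" "f P \<noteq> z" unfolding veto_prefs_def by auto
  then have "(x, f P) \<in> P k" for k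
    using Ri(3) top_preferred[OF Rj(1)] Rj(2) unfolding P_def by auto
  with eff P show False unfolding efficient_def by blast
qed

lemma strong_veto_sets_subset_singleton:
  fixes f :: "('i \<Rightarrow> 'a::finite rel) \<Rightarrow> 'a"
  assumes "efficient f" and "i \<noteq> j"
    and "strong_veto_set f i \<noteq> {}" and "strong_veto_set f j \<noteq> {}"
  shows "\<exists>y. \<forall>k. strong_veto_set f k \<subseteq> {y}"
proof -
  obtain x z where "strongly_vetoes f i x" "strongly_vetoes f j z"
    using assms(3,4) unfolding strong_veto_set_def by blast
  then have "strongly_vetoes f k w \<Longrightarrow> w = x" for k w
    using strongly_vetoed_eq[OF assms(1)] \<open>i \<noteq> j\<close> by metis
  then show ?thesis unfolding strong_veto_set_def by blast
qed

lemma strong_veto_sets_eq_iff: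
  fixes f :: "('i \<Rightarrow> 'a::finite rel) \<Rightarrow> 'a"
  assumes "card (UNIV :: 'a set) \<ge> 2" and "efficient f"
  shows "(\<forall>i. strong_veto_set f i = veto_set f i) \<longleftrightarrow>
    ((\<forall>i j. veto_set f i \<noteq> {} \<longrightarrow> veto_set f j \<noteq> {} \<longrightarrow> i = j) \<and>
       (\<forall>i. veto_set f i \<noteq> {} \<longrightarrow> strong_veto_set f i = veto_set f i))
    \<or> (\<exists>y. \<forall>i. strong_veto_set f i = veto_set f i \<and> veto_set f i \<subseteq> {y})"
    (is "?eq \<longleftrightarrow> ?single_vetoer \<or> ?common_veto")
proof
  assume eq: ?eq
  show "?single_vetoer \<or> ?common_veto"
  proof (cases "\<exists>i j. i \<noteq> j \<and> veto_set f i \<noteq> {} \<and> veto_set f j \<noteq> {}")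
    case True
    then obtain i j where "i \<noteq> j" "strong_veto_set f i \<noteq> {}" "strong_veto_set f j \<noteq> {}"
      using eq by metis
    then obtain y where "\<forall>k. strong_veto_set f k \<subseteq> {y}"
      using strong_veto_sets_subset_singleton[OF assms(2)] by blast
    with eq show ?thesis by metis
  next
    case False
    with eq show ?thesis by blast
  qed
next
  assume "?single_vetoer \<or> ?common_veto"
  moreover have "strong_veto_set f i \<subseteq> veto_set f i" for i
    using strong_veto_set_subset_veto_set[OF assms(1)] .
  ultimately show ?eq by blast
qed

theorem corollary1:
  fixes f :: "('i::finite \<Rightarrow> 'a::finite rel) \<Rightarrow> 'a"
  assumes "card (UNIV :: 'i set) \<ge> 2" and "card (UNIV :: 'a set) \<ge> 2"
    and "onto f" and "efficient f" and "tops_only f"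
  shows "NOM f \<longleftrightarrow>
    ((\<forall>i j. veto_set f i \<noteq> {} \<longrightarrow> veto_set f j \<noteq> {} \<longrightarrow> i = j) \<and>
       (\<forall>i. veto_set f i \<noteq> {} \<longrightarrow> strong_veto_set f i = veto_set f i))
    \<or> (\<exists>y. \<forall>i. strong_veto_set f i = veto_set f i \<and> veto_set f i \<subseteq> {y})"
  using NOM_iff_strong_veto_sets_eq[OF assms(2,4,5)] strong_veto_sets_eq_iff[OF assms(2,4)]
  by (rule trans)

end
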